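(* Let $\kappa$ be an infinite cardinal. There exist a non-abelian group $G$ with $|G|=2^\kappa$ and a colouring $c:G\to\kappa$ such that for all non-identity elements $x,y\in G$, if $c(x)=c(y)$ then $c(x)\neq c(xy)$. *)

theory Defs
  imports "HOL-Algebra.Group" "HOL-Library.Equipollence"
begin

end

theory Submission
  imports Defs "HOL-Combinatorics.Transposition"
begin

text \<open>Regard Pow K as the elementary abelian 2-group under symmetric difference, fix t \<in> K and
an involution \<sigma> of K fixing t, and let X act on the second factor through \<sigma> exactly when
t \<in> X. This is a semidirect product of Pow (K - {t}) with the group of order two generated
by {t}; it has cardinality 2^|K| and is non-abelian once \<sigma> moves a point of K.
Colour a nonempty X by an element of X, choosing t whenever t \<in> X. If X and Y get the same
colour p, then either t lies in both, and t \<notin> XY, or t lies in neither, and XY is the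
symmetric difference of X and Y; in both cases p \<notin> XY, so XY gets a different colour.
Re-embedding K into K minus a point frees one colour for the identity {}.\<close>

definition twisted_mult :: "'a \<Rightarrow> ('a \<Rightarrow> 'a) \<Rightarrow> 'a set \<Rightarrow> 'a set \<Rightarrow> 'a set" where
  "twisted_mult t \<sigma> X Y = {x. (x \<in> X) \<noteq> (if t \<in> X then \<sigma> x \<in> Y else x \<in> Y)}"

definition twisted_group :: "'a set \<Rightarrow> 'a \<Rightarrow> ('a \<Rightarrow> 'a) \<Rightarrow> 'a set monoid" where
  "twisted_group K t \<sigma> = \<lparr>carrier = Pow K, mult = twisted_mult t \<sigma>, one = {}\<rparr>"

lemma mem_twisted_mult [simp]:
  "x \<in> twisted_mult t \<sigma> X Y \<longleftrightarrow> (x \<in> X) \<noteq> (if t \<in> X then \<sigma> x \<in> Y else x \<in> Y)"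
  by (simp add: twisted_mult_def)

lemma twisted_group_simps [simp]:
  "carrier (twisted_group K t \<sigma>) = Pow K"
  "mult (twisted_group K t \<sigma>) = twisted_mult t \<sigma>"
  "one (twisted_group K t \<sigma>) = {}"
  by (simp_all add: twisted_group_def)

lemma twisted_mult_assoc:
  assumes inv: "\<And>x. \<sigma> (\<sigma> x) = x" and fix_t: "\<sigma> t = t"
  shows "twisted_mult t \<sigma> (twisted_mult t \<sigma> X Y) Z = twisted_mult t \<sigma> X (twisted_mult t \<sigma> Y Z)"
  by (cases "t \<in> X"; cases "t \<in> Y") (auto simp: inv fix_t)

lemma twisted_mult_closed:
  assumes inv: "\<And>x. \<sigma> (\<sigma> x) = x" and closed: "\<sigma> ` K \<subseteq> K"
    and "X \<subseteq> K" "Y \<subseteq> K"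
  shows "twisted_mult t \<sigma> X Y \<subseteq> K"
proof
  fix x assume x: "x \<in> twisted_mult t \<sigma> X Y"
  have "\<sigma> x \<in> K \<Longrightarrow> x \<in> K"
    using closed inv by (metis image_subset_iff)
  with x \<open>X \<subseteq> K\<close> \<open>Y \<subseteq> K\<close> show "x \<in> K"
    by (auto split: if_splits)
qed

lemma group_twisted_group:
  assumes inv: "\<And>x. \<sigma> (\<sigma> x) = x" and fix_t: "\<sigma> t = t" and closed: "\<sigma> ` K \<subseteq> K"
  shows "group (twisted_group K t \<sigma>)"
proof (rule groupI)
  let ?G = "twisted_group K t \<sigma>"
  show "X \<otimes>\<^bsub>?G\<^esub> Y \<in> carrier ?G" if "X \<in> carrier ?G" "Y \<in> carrier ?G" for X Y
    using that twisted_mult_closed[OF inv closed] by simp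
  show "\<exists>Y\<in>carrier ?G. Y \<otimes>\<^bsub>?G\<^esub> X = \<one>\<^bsub>?G\<^esub>" if "X \<in> carrier ?G" for X
  proof
    show "(if t \<in> X then \<sigma> -` X else X) \<in> carrier ?G"
      using that closed inv by (auto simp: subset_eq) metis
    show "(if t \<in> X then \<sigma> -` X else X) \<otimes>\<^bsub>?G\<^esub> X = \<one>\<^bsub>?G\<^esub>"
      by (cases "t \<in> X") (auto simp: fix_t)
  qed
qed (simp_all add: twisted_mult_assoc[OF inv fix_t] set_eq_iff)

lemma not_comm_group_twisted_group:
  assumes inv: "\<And>x. \<sigma> (\<sigma> x) = x" and fix_t: "\<sigma> t = t"
    and "t \<in> K" "a \<in> K" and moved: "\<sigma> a \<noteq> a"
  shows "\<not> comm_group (twisted_group K t \<sigma>)"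
proof
  assume "comm_group (twisted_group K t \<sigma>)"
  then have "twisted_mult t \<sigma> {t} {a} = twisted_mult t \<sigma> {a} {t}"
    using comm_monoid.m_comm[OF comm_group.axioms(1), of "twisted_group K t \<sigma>" "{t}" "{a}"]
      \<open>t \<in> K\<close> \<open>a \<in> K\<close> by simp
  moreover have "\<sigma> a \<noteq> t" "t \<noteq> a"
    using moved fix_t inv by metis+
  then have "\<sigma> a \<in> twisted_mult t \<sigma> {t} {a}" "\<sigma> a \<notin> twisted_mult t \<sigma> {a} {t}"
    using moved inv by simp_all
  ultimately show False
    by blast
qed

definition pick :: "'a \<Rightarrow> 'a set \<Rightarrow> 'a" where
  "pick t X = (if t \<in> X then t else SOME x. x \<in> X)"

lemma pick_in: "X \<noteq> {} \<Longrightarrow> pick t X \<in> X"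
  by (auto simp: pick_def intro: someI)

lemma pick_notin_twisted_mult:
  assumes inv: "\<And>x. \<sigma> (\<sigma> x) = x" and fix_t: "\<sigma> t = t"
    and "X \<noteq> {}" "Y \<noteq> {}" and same: "pick t X = pick t Y"
  shows "pick t X \<notin> twisted_mult t \<sigma> X Y"
proof (cases "pick t X = t")
  case True
  then have "t \<in> X" "t \<in> Y"
    using same pick_in \<open>X \<noteq> {}\<close> \<open>Y \<noteq> {}\<close> by metis+
  with True fix_t show ?thesis
    by simp
next
  case False
  then have "t \<notin> X" "t \<notin> Y"
    using same unfolding pick_def by (auto split: if_splits)
  moreover have "pick t X \<in> X" "pick t X \<in> Y"
    using same pick_in \<open>X \<noteq> {}\<close> \<open>Y \<noteq> {}\<close> by metis+
  ultimately show ?thesis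
    by simp
qed

definition pick_colouring :: "'a \<Rightarrow> ('a \<Rightarrow> 'c) \<Rightarrow> 'c \<Rightarrow> 'a set \<Rightarrow> 'c" where
  "pick_colouring t h z X = (if X = {} then z else h (pick t X))"

lemma pick_colouring_in:
  assumes "h ` K \<subseteq> C" "z \<in> C"
  shows "pick_colouring t h z \<in> Pow K \<rightarrow> C"
proof
  fix X assume "X \<in> Pow K"
  then show "pick_colouring t h z X \<in> C"
    using assms pick_in[of X t] by (auto simp: pick_colouring_def)
qed

lemma pick_colouring_twisted_mult:
  assumes inv: "\<And>x. \<sigma> (\<sigma> x) = x" and fix_t: "\<sigma> t = t" and closed: "\<sigma> ` K \<subseteq> K"
    and h: "inj_on h K" "z \<notin> h ` K"
    and X: "X \<subseteq> K" "X \<noteq> {}" and Y: "Y \<subseteq> K" "Y \<noteq> {}"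
    and same: "pick_colouring t h z X = pick_colouring t h z Y"
  shows "pick_colouring t h z X \<noteq> pick_colouring t h z (twisted_mult t \<sigma> X Y)"
proof -
  have pick_X: "pick t X \<in> K"
    using pick_in[OF X(2)] X(1) by blast
  show ?thesis
  proof (cases "twisted_mult t \<sigma> X Y = {}")
    case True
    have "h (pick t X) \<noteq> z"
      using pick_X h(2) by blast
    with True X show ?thesis
      by (simp add: pick_colouring_def)
  next
    case False
    have "h (pick t X) = h (pick t Y)"
      using same X Y by (simp add: pick_colouring_def)
    then have "pick t X = pick t Y"
      using inj_onD[OF h(1)] pick_X pick_in[OF Y(2)] Y(1) by blast
    then have "pick t X \<noteq> pick t (twisted_mult t \<sigma> X Y)"
      using pick_notin_twisted_mult[OF inv fix_t X(2) Y(2)] pick_in[OF False] by metis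
    moreover have "pick t (twisted_mult t \<sigma> X Y) \<in> K"
      using pick_in[OF False] twisted_mult_closed[OF inv closed X(1) Y(1)] by blast
    ultimately have "h (pick t X) \<noteq> h (pick t (twisted_mult t \<sigma> X Y))"
      using inj_on_eq_iff[OF h(1)] pick_X by blast
    with False X show ?thesis
      by (simp add: pick_colouring_def)
  qed
qed

lemma infinite_lepoll_Diff_singleton:
  assumes "infinite K"
  shows "K \<lesssim> K - {z}"
proof -
  have "insert z (K - {z}) \<approx> K - {z}"
    using assms by (intro infinite_insert_eqpoll) simp
  moreover have "K \<lesssim> insert z (K - {z})"
    by (intro subset_imp_lepoll) blast
  ultimately show ?thesis
    by (meson eqpoll_imp_lepoll lepoll_trans)
qed

theorem mainTheorem4:
  fixes K :: "'k set"
  assumes "infinite K"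
  shows "\<exists>G :: 'k set monoid.
           group G \<and> \<not> comm_group G \<and> carrier G \<approx> Pow K \<and>
           (\<exists>c. c \<in> carrier G \<rightarrow> K \<and>
              (\<forall>x\<in>carrier G. \<forall>y\<in>carrier G.
                 x \<noteq> \<one>\<^bsub>G\<^esub> \<longrightarrow> y \<noteq> \<one>\<^bsub>G\<^esub> \<longrightarrow>
                 c x = c y \<longrightarrow> c x \<noteq> c (x \<otimes>\<^bsub>G\<^esub> y)))"
proof -
  obtain S where "finite S" "card S = 3" "S \<subseteq> K"
    using infinite_arbitrarily_large[OF assms] by blast
  then obtain t a b where tab: "t \<in> K" "a \<in> K" "b \<in> K" "a \<noteq> b" "t \<noteq> a" "t \<noteq> b"
    by (auto simp: card_3_iff)
  define \<sigma> where "\<sigma> = transpose a b"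
  have inv: "\<sigma> (\<sigma> x) = x" for x
    by (simp add: \<sigma>_def)
  have fix_t: "\<sigma> t = t" and moved: "\<sigma> a \<noteq> a" and closed: "\<sigma> ` K \<subseteq> K"
    using tab by (auto simp: \<sigma>_def transpose_def)
  obtain h where h: "inj_on h K" "h ` K \<subseteq> K - {t}"
    using infinite_lepoll_Diff_singleton[OF assms, of t] unfolding lepoll_def by blast
  then have h_into: "h ` K \<subseteq> K" and h_avoid: "t \<notin> h ` K"
    by blast+
  let ?G = "twisted_group K t \<sigma>" and ?c = "pick_colouring t h t"
  show ?thesis
  proof (intro exI[of _ ?G] exI[of _ ?c] conjI)
    show "group ?G"
      using inv fix_t closed by (rule group_twisted_group)
    show "\<not> comm_group ?G"
      using inv fix_t tab(1,2) moved by (rule not_comm_group_twisted_group)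
    show "carrier ?G \<approx> Pow K"
      by (simp add: eqpoll_refl)
    show "?c \<in> carrier ?G \<rightarrow> K"
      using pick_colouring_in[OF h_into tab(1)] by simp
    show "\<forall>X\<in>carrier ?G. \<forall>Y\<in>carrier ?G. X \<noteq> \<one>\<^bsub>?G\<^esub> \<longrightarrow> Y \<noteq> \<one>\<^bsub>?G\<^esub> \<longrightarrow>
        ?c X = ?c Y \<longrightarrow> ?c X \<noteq> ?c (X \<otimes>\<^bsub>?G\<^esub> Y)"
      using pick_colouring_twisted_mult[OF inv fix_t closed h(1) h_avoid] by simp
  qed
qed

end
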